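(* Let $P=(|P|,\preccurlyeq)$ be a finite poset with a bicoloring, and fix a reference total ordering of $|P|$. Then the sign-imbalance of $P$ (number of even linearizations minus number of odd linearizations) equals the number of even linearizations compatible with the bicoloring minus the number of odd linearizations compatible with the bicoloring. In particular, if $P$ has no linearization compatible with the given bicoloring, then $P$ is sign-balanced (its sign-imbalance is $0$).
   Context: A linearization of a finite poset $P$ with $n$ elements is a total order on $|P|$ refining $\preccurlyeq$. Given a fixed reference ordering $q_1,\dots,q_n$ of $|P|$, a linearization listing the elements as $q_{\sigma(1)}<\dots<q_{\sigma(n)}$ is called even or odd according to whether the permutation $\sigma$ is even or odd. A bicoloring of $P$ is a partition of $|P|$ into two color classes such that whenever one element covers another (i.e. $x\preccurlyeq y$, $x\neq y$, no element strictly between), they have opposite colors. A linearization is compatible with the bicoloring if any two elements that are consecutive in the linearization have opposite colors. *)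

theory Defs
  imports "HOL-Combinatorics.Permutations"
begin

definition finite_poset :: "'a set \<Rightarrow> ('a \<Rightarrow> 'a \<Rightarrow> bool) \<Rightarrow> bool" where
  "finite_poset S le \<longleftrightarrow> finite S \<and>
     (\<forall>x\<in>S. le x x) \<and>
     (\<forall>x\<in>S. \<forall>y\<in>S. le x y \<and> le y x \<longrightarrow> x = y) \<and>
     (\<forall>x\<in>S. \<forall>y\<in>S. \<forall>z\<in>S. le x y \<and> le y z \<longrightarrow> le x z)"

definition covers :: "'a set \<Rightarrow> ('a \<Rightarrow> 'a \<Rightarrow> bool) \<Rightarrow> 'a \<Rightarrow> 'a \<Rightarrow> bool" where
  "covers S le x y \<longleftrightarrow> x \<in> S \<and> y \<in> S \<and> le x y \<and> x \<noteq> y \<and>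
     \<not> (\<exists>z\<in>S. le x z \<and> le z y \<and> z \<noteq> x \<and> z \<noteq> y)"

definition bicoloring :: "'a set \<Rightarrow> ('a \<Rightarrow> 'a \<Rightarrow> bool) \<Rightarrow> ('a \<Rightarrow> bool) \<Rightarrow> bool" where
  "bicoloring S le col \<longleftrightarrow> (\<forall>x y. covers S le x y \<longrightarrow> col x \<noteq> col y)"

definition linearization :: "'a set \<Rightarrow> ('a \<Rightarrow> 'a \<Rightarrow> bool) \<Rightarrow> 'a list \<Rightarrow> bool" where
  "linearization S le ls \<longleftrightarrow> distinct ls \<and> set ls = S \<and>
     (\<forall>i<length ls. \<forall>j<length ls. le (ls ! i) (ls ! j) \<longrightarrow> i \<le> j)"

definition linearizations :: "'a set \<Rightarrow> ('a \<Rightarrow> 'a \<Rightarrow> bool) \<Rightarrow> 'a list set" where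
  "linearizations S le = {ls. linearization S le ls}"

definition compatible :: "('a \<Rightarrow> bool) \<Rightarrow> 'a list \<Rightarrow> bool" where
  "compatible col ls \<longleftrightarrow> (\<forall>i. Suc i < length ls \<longrightarrow> col (ls ! i) \<noteq> col (ls ! Suc i))"

text \<open>Given the reference ordering qs = [q_1,...,q_n] (0-indexed), the linearization
  ls lists q_{\<sigma>(0)}, ..., q_{\<sigma>(n-1)}; \<sigma> is extended by the identity outside {0..<n}.\<close>
definition lin_perm :: "'a list \<Rightarrow> 'a list \<Rightarrow> nat \<Rightarrow> nat" where
  "lin_perm qs ls k = (if k < length ls then (THE i. i < length qs \<and> qs ! i = ls ! k) else k)"

definition sign_imbalance :: "'a set \<Rightarrow> ('a \<Rightarrow> 'a \<Rightarrow> bool) \<Rightarrow> 'a list \<Rightarrow> int" where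
  "sign_imbalance S le qs =
     int (card {ls \<in> linearizations S le. evenperm (lin_perm qs ls)})
   - int (card {ls \<in> linearizations S le. \<not> evenperm (lin_perm qs ls)})"

definition sign_balanced :: "'a set \<Rightarrow> ('a \<Rightarrow> 'a \<Rightarrow> bool) \<Rightarrow> 'a list \<Rightarrow> bool" where
  "sign_balanced S le qs \<longleftrightarrow> sign_imbalance S le qs = 0"

end

theory Submission
  imports Defs
begin

text \<open>Swapping two adjacent elements of equal colour in a linearization gives again a
  linearization: by the bicoloring condition they do not form a cover, and adjacent elements of a
  linearization are comparable only if one covers the other. The swap flips the parity of the
  linearization. Performed at the first monochromatic position, which it does not move because it
  leaves the colour sequence unchanged, the swap is a sign-reversing involution on the
  non-compatible linearizations, so these cancel in the sign-imbalance.\<close>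

lemma card_diff_eq_by_sign_reversing_involution:
  assumes "finite A"
    and inv: "\<And>x. x \<in> A \<Longrightarrow> \<not> P x \<Longrightarrow>
      f x \<in> A \<and> \<not> P (f x) \<and> f (f x) = x \<and> (E (f x) \<longleftrightarrow> \<not> E x)"
  shows "int (card {x \<in> A. E x}) - int (card {x \<in> A. \<not> E x})
       = int (card {x \<in> A. P x \<and> E x}) - int (card {x \<in> A. P x \<and> \<not> E x})"
proof -
  have "bij_betw f {x \<in> A. \<not> P x \<and> E x} {x \<in> A. \<not> P x \<and> \<not> E x}"
    by (rule bij_betw_byWitness[where f' = f]) (use inv in auto)
  then have cancel: "card {x \<in> A. \<not> P x \<and> E x} = card {x \<in> A. \<not> P x \<and> \<not> E x}"
    by (rule bij_betw_same_card)
  have split: "card {x \<in> A. Q x} = card {x \<in> A. P x \<and> Q x} + card {x \<in> A. \<not> P x \<and> Q x}"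
    for Q
  proof -
    have "{x \<in> A. Q x} = {x \<in> A. P x \<and> Q x} \<union> {x \<in> A. \<not> P x \<and> Q x}" by auto
    also have "card \<dots> = card {x \<in> A. P x \<and> Q x} + card {x \<in> A. \<not> P x \<and> Q x}"
      by (rule card_Un_disjoint) (use \<open>finite A\<close> in auto)
    finally show ?thesis .
  qed
  show ?thesis using split[of E] split[of "\<lambda>x. \<not> E x"] cancel by simp
qed

lemma finite_linearizations:
  assumes "finite S"
  shows "finite (linearizations S le)"
proof (rule finite_subset)
  show "linearizations S le \<subseteq> {xs. set xs \<subseteq> S \<and> length xs = card S}"
    by (auto simp: linearizations_def linearization_def distinct_card)
  show "finite {xs. set xs \<subseteq> S \<and> length xs = card S}"
    using assms by (rule finite_lists_length_eq)
qed

lemma lin_perm_nth: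
  assumes "distinct qs" "k < length ls" "ls ! k \<in> set qs"
  shows "lin_perm qs ls k < length qs \<and> qs ! lin_perm qs ls k = ls ! k"
proof -
  obtain j where j: "j < length qs" "qs ! j = ls ! k"
    using assms(3) by (auto simp: in_set_conv_nth)
  have "lin_perm qs ls k = (THE i. i < length qs \<and> qs ! i = ls ! k)"
    using assms(2) by (simp add: lin_perm_def)
  also have "\<dots> = j"
  proof (rule the_equality)
    show "j < length qs \<and> qs ! j = ls ! k" using j by simp
    show "i = j" if "i < length qs \<and> qs ! i = ls ! k" for i
      using that j assms(1) by (metis nth_eq_iff_index_eq)
  qed
  finally show ?thesis using j by simp
qed

lemma lin_perm_permutes:
  assumes "distinct qs" "distinct ls" "set ls = set qs"
  shows "lin_perm qs ls permutes {..<length qs}"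
proof -
  have len: "length ls = length qs" using assms by (metis distinct_card)
  let ?p = "lin_perm qs ls"
  have qs_p: "?p k < length qs \<and> qs ! ?p k = ls ! k" if "k < length qs" for k
    using lin_perm_nth[OF assms(1), of k ls] that len assms(3) nth_mem[of k ls] by simp
  have inj: "inj_on ?p {..<length qs}"
  proof (rule inj_onI)
    fix a b assume "a \<in> {..<length qs}" "b \<in> {..<length qs}" "?p a = ?p b"
    then have "ls ! a = ls ! b" using qs_p by (metis lessThan_iff)
    then show "a = b" using \<open>a \<in> _\<close> \<open>b \<in> _\<close> len assms(2) by (simp add: nth_eq_iff_index_eq)
  qed
  have "?p ` {..<length qs} = {..<length qs}"
    by (rule endo_inj_surj) (use qs_p inj in auto)
  with inj have "bij_betw ?p {..<length qs} {..<length qs}" by (simp add: bij_betw_def)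
  then show ?thesis by (rule bij_imp_permutes) (simp add: lin_perm_def len)
qed

lemma lin_perm_permute_list:
  assumes "g permutes {..<length ls}"
  shows "lin_perm qs (permute_list g ls) = lin_perm qs ls \<circ> g"
proof
  fix k
  show "lin_perm qs (permute_list g ls) k = (lin_perm qs ls \<circ> g) k"
  proof (cases "k < length ls")
    case True
    then have "g k < length ls" using permutes_in_image[OF assms] by simp
    then show ?thesis using True by (simp add: lin_perm_def permute_list_nth[OF assms])
  next
    case False
    then have "g k = k" using permutes_not_in[OF assms] by simp
    then show ?thesis using False by (simp add: lin_perm_def)
  qed
qed

lemma evenperm_lin_perm_adjacent_swap:
  assumes "distinct qs" "distinct ls" "set ls = set qs" "Suc i < length ls"
  shows "evenperm (lin_perm qs (permute_list (transpose i (Suc i)) ls))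
     \<longleftrightarrow> \<not> evenperm (lin_perm qs ls)"
proof -
  have "transpose i (Suc i) permutes {..<length ls}"
    using assms(4) by (simp add: permutes_swap_id)
  moreover have "permutation (lin_perm qs ls)"
    using lin_perm_permutes[OF assms(1-3)] permutes_imp_permutation by blast
  ultimately show ?thesis
    by (simp add: lin_perm_permute_list evenperm_comp evenperm_swap permutation_swap_id)
qed

lemma linearization_le_imp_index_le:
  assumes "linearization S le ls" "p < length ls" "q < length ls" "le (ls ! p) (ls ! q)"
  shows "p \<le> q"
  using assms by (auto simp: linearization_def)

lemma linearization_adjacent_le_imp_covers:
  assumes lin: "linearization S le ls" and i: "Suc i < length ls"
    and le: "le (ls ! i) (ls ! Suc i)"
  shows "covers S le (ls ! i) (ls ! Suc i)"
proof -
  have "distinct ls" "set ls = S" using lin by (auto simp: linearization_def)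
  have "z = ls ! i \<or> z = ls ! Suc i"
    if "z \<in> S" "le (ls ! i) z" "le z (ls ! Suc i)" for z
  proof -
    obtain k where k: "k < length ls" "z = ls ! k"
      using \<open>z \<in> S\<close> \<open>set ls = S\<close> by (auto simp: in_set_conv_nth)
    have "i \<le> k"
      using linearization_le_imp_index_le[OF lin, of i k] i k that(2) by simp
    moreover have "k \<le> Suc i"
      using linearization_le_imp_index_le[OF lin, of k "Suc i"] i k that(3) by simp
    ultimately show ?thesis using k by (auto simp: le_Suc_eq)
  qed
  moreover have "ls ! i \<noteq> ls ! Suc i"
    using \<open>distinct ls\<close> i by (simp add: nth_eq_iff_index_eq)
  ultimately show ?thesis
    using le i \<open>set ls = S\<close> by (auto simp: covers_def)
qed

lemma linearization_adjacent_swap: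
  assumes lin: "linearization S le ls" and i: "Suc i < length ls"
    and not_le: "\<not> le (ls ! i) (ls ! Suc i)"
  shows "linearization S le (permute_list (transpose i (Suc i)) ls)"
proof -
  let ?t = "transpose i (Suc i)"
  have t: "?t permutes {..<length ls}" using i by (simp add: permutes_swap_id)
  have "p \<le> q"
    if p: "p < length ls" and q: "q < length ls"
      and le: "le (permute_list ?t ls ! p) (permute_list ?t ls ! q)" for p q
  proof (rule ccontr)
    assume "\<not> p \<le> q"
    have le': "le (ls ! ?t p) (ls ! ?t q)" using le p q by (simp add: permute_list_nth[OF t])
    have "?t p < length ls" "?t q < length ls" using p q i by (auto simp: transpose_def)
    then have "?t p \<le> ?t q" using linearization_le_imp_index_le[OF lin _ _ le'] by blast
    with \<open>\<not> p \<le> q\<close> have "q = i \<and> p = Suc i"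
      by (auto simp: transpose_def split: if_splits)
    then show False using le' not_le by simp
  qed
  moreover have "distinct (permute_list ?t ls)" "set (permute_list ?t ls) = S"
    using lin t by (simp_all add: linearization_def)
  ultimately show ?thesis unfolding linearization_def by simp
qed

definition monochromatic_at :: "('a \<Rightarrow> bool) \<Rightarrow> 'a list \<Rightarrow> nat \<Rightarrow> bool" where
  "monochromatic_at col ls i \<longleftrightarrow> Suc i < length ls \<and> col (ls ! i) = col (ls ! Suc i)"

definition first_monochromatic :: "('a \<Rightarrow> bool) \<Rightarrow> 'a list \<Rightarrow> nat" where
  "first_monochromatic col ls = (LEAST i. monochromatic_at col ls i)"

definition swap_first_monochromatic :: "('a \<Rightarrow> bool) \<Rightarrow> 'a list \<Rightarrow> 'a list" where
  "swap_first_monochromatic col ls =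
     (let i = first_monochromatic col ls in permute_list (transpose i (Suc i)) ls)"

lemma compatible_iff_not_monochromatic_at:
  "compatible col ls \<longleftrightarrow> (\<nexists>i. monochromatic_at col ls i)"
  by (auto simp: compatible_def monochromatic_at_def)

lemma monochromatic_at_conv_map:
  "monochromatic_at col ls i \<longleftrightarrow> Suc i < length (map col ls) \<and> map col ls ! i = map col ls ! Suc i"
  by (auto simp: monochromatic_at_def)

lemma first_monochromatic:
  assumes "\<not> compatible col ls"
  shows "Suc (first_monochromatic col ls) < length ls"
    and "col (ls ! first_monochromatic col ls) = col (ls ! Suc (first_monochromatic col ls))"
proof -
  have "monochromatic_at col ls (first_monochromatic col ls)"
    using assms unfolding compatible_iff_not_monochromatic_at first_monochromatic_def
    by (blast intro: LeastI)
  then show "Suc (first_monochromatic col ls) < length ls"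
    and "col (ls ! first_monochromatic col ls) = col (ls ! Suc (first_monochromatic col ls))"
    by (simp_all add: monochromatic_at_def)
qed

lemma map_swap_first_monochromatic:
  assumes "\<not> compatible col ls"
  shows "map col (swap_first_monochromatic col ls) = map col ls"
proof -
  let ?i = "first_monochromatic col ls"
  note mono = first_monochromatic[OF assms]
  have t: "transpose ?i (Suc ?i) permutes {..<length ls}"
    using mono(1) by (simp add: permutes_swap_id)
  show ?thesis
    unfolding swap_first_monochromatic_def Let_def
  proof (rule nth_equalityI)
    fix k assume "k < length (map col (permute_list (transpose ?i (Suc ?i)) ls))"
    then have k: "k < length ls" by simp
    have "col (ls ! transpose ?i (Suc ?i) k) = col (ls ! k)"
      using mono(2) by (simp add: transpose_def)
    then show "map col (permute_list (transpose ?i (Suc ?i)) ls) ! k = map col ls ! k"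
      using k by (simp add: permute_list_nth[OF t])
  qed simp
qed

lemma swap_first_monochromatic_involutive:
  assumes "\<not> compatible col ls"
  shows "swap_first_monochromatic col (swap_first_monochromatic col ls) = ls"
proof -
  let ?i = "first_monochromatic col ls"
  let ?t = "transpose ?i (Suc ?i)"
  have t: "?t permutes {..<length ls}"
    using first_monochromatic(1)[OF assms] by (simp add: permutes_swap_id)
  have swap: "swap_first_monochromatic col ls = permute_list ?t ls"
    by (simp add: swap_first_monochromatic_def Let_def)
  have first_swap: "first_monochromatic col (swap_first_monochromatic col ls) = ?i"
    unfolding first_monochromatic_def monochromatic_at_conv_map
      map_swap_first_monochromatic[OF assms] ..
  have "swap_first_monochromatic col (swap_first_monochromatic col ls)
      = permute_list ?t (swap_first_monochromatic col ls)"
    unfolding swap_first_monochromatic_def[of col "swap_first_monochromatic col ls"] Let_def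
      first_swap ..
  also have "\<dots> = permute_list ?t (permute_list ?t ls)"
    unfolding swap ..
  also have "\<dots> = permute_list (?t \<circ> ?t) ls"
    by (rule permute_list_compose[OF t, symmetric])
  finally show ?thesis by simp
qed

lemma not_compatible_swap_first_monochromatic:
  assumes "\<not> compatible col ls"
  shows "\<not> compatible col (swap_first_monochromatic col ls)"
  using assms unfolding compatible_iff_not_monochromatic_at monochromatic_at_conv_map
    map_swap_first_monochromatic[OF assms] .

lemma swap_first_monochromatic_in_linearizations:
  assumes "bicoloring S le col" "ls \<in> linearizations S le" "\<not> compatible col ls"
  shows "swap_first_monochromatic col ls \<in> linearizations S le"
proof -
  let ?i = "first_monochromatic col ls"
  have lin: "linearization S le ls" using assms(2) by (simp add: linearizations_def)
  note mono = first_monochromatic[OF assms(3)]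
  have "\<not> le (ls ! ?i) (ls ! Suc ?i)"
    using linearization_adjacent_le_imp_covers[OF lin mono(1)] mono(2) assms(1)
    by (auto simp: bicoloring_def)
  then show ?thesis
    using linearization_adjacent_swap[OF lin mono(1)]
    by (simp add: linearizations_def swap_first_monochromatic_def Let_def)
qed

lemma evenperm_lin_perm_swap_first_monochromatic:
  assumes "distinct qs" "ls \<in> linearizations (set qs) le" "\<not> compatible col ls"
  shows "evenperm (lin_perm qs (swap_first_monochromatic col ls)) \<longleftrightarrow> \<not> evenperm (lin_perm qs ls)"
  using evenperm_lin_perm_adjacent_swap[OF assms(1) _ _ first_monochromatic(1)[OF assms(3)]]
    assms(2)
  by (simp add: linearizations_def linearization_def swap_first_monochromatic_def Let_def)

theorem theorem2p2:
  fixes S :: "'a set" and le :: "'a \<Rightarrow> 'a \<Rightarrow> bool"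
    and col :: "'a \<Rightarrow> bool" and qs :: "'a list"
  assumes "finite_poset S le"
    and "bicoloring S le col"
    and "distinct qs" and "set qs = S"
  shows "(sign_imbalance S le qs =
           int (card {ls \<in> linearizations S le. compatible col ls \<and> evenperm (lin_perm qs ls)})
         - int (card {ls \<in> linearizations S le. compatible col ls \<and> \<not> evenperm (lin_perm qs ls)}))
         \<and> ((\<nexists>ls. ls \<in> linearizations S le \<and> compatible col ls) \<longrightarrow> sign_balanced S le qs)"
proof -
  let ?f = "swap_first_monochromatic col"
  have finite: "finite (linearizations S le)"
    using assms(1) by (simp add: finite_poset_def finite_linearizations)
  have involution: "?f ls \<in> linearizations S le \<and> \<not> compatible col (?f ls) \<and> ?f (?f ls) = ls
      \<and> (evenperm (lin_perm qs (?f ls)) \<longleftrightarrow> \<not> evenperm (lin_perm qs ls))"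
    if "ls \<in> linearizations S le" "\<not> compatible col ls" for ls
    using that assms(2-4) swap_first_monochromatic_in_linearizations
      not_compatible_swap_first_monochromatic swap_first_monochromatic_involutive
      evenperm_lin_perm_swap_first_monochromatic
    by blast
  have imbalance: "sign_imbalance S le qs =
      int (card {ls \<in> linearizations S le. compatible col ls \<and> evenperm (lin_perm qs ls)})
    - int (card {ls \<in> linearizations S le. compatible col ls \<and> \<not> evenperm (lin_perm qs ls)})"
    unfolding sign_imbalance_def
    by (rule card_diff_eq_by_sign_reversing_involution[OF finite involution])
  moreover have "sign_balanced S le qs" if "\<nexists>ls. ls \<in> linearizations S le \<and> compatible col ls"
  proof -
    have no_compatible: "{ls \<in> linearizations S le. compatible col ls \<and> Q ls} = {}" for Q
      using that by auto
    show ?thesis by (simp add: sign_balanced_def imbalance no_compatible)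
  qed
  ultimately show ?thesis by blast
qed

end
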